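(* Let $F$, $X_0$, $B$, $C$ be as in the context. Suppose that for every $X_1\in\mathbb{R}^m$ with $X_1\neq 0$ and $CX_1=0$ there is no $X_2\in\mathbb{R}^m$ with $CX_2=-B(X_1,X_1)$ (i.e. no approximate solution of degree 1, $X_0+tX_1$ with $X_1\ne0$, extends to an approximate solution $X_0+tX_1+t^2X_2$ of degree 2). Then $F(X)=0$ has no nonconstant analytic family of solutions with initial term $X_0$.
   Context: Let $m,n\ge 1$ and let $F=(F_1,\dots,F_n):\mathbb{R}^m\to\mathbb{R}^n$, where each component is a polynomial of degree at most 2 written as $F_k(X)=\sum_{i=1}^m\sum_{j=1}^m\alpha^k_{ij}x_ix_j+\sum_{i=1}^m\beta^k_ix_i+\gamma^k$ for $X=(x_1,\dots,x_m)$, with real coefficients and $\alpha^k_{ij}=\alpha^k_{ji}$. Fix $X_0\in\mathbb{R}^m$ with $F(X_0)=0$. Define the bilinear map $B:\mathbb{R}^m\times\mathbb{R}^m\to\mathbb{R}^n$ by $B(X,Y)_k=\sum_{i,j=1}^m\alpha^k_{ij}x_iy_j$, the linear map $A:\mathbb{R}^m\to\mathbb{R}^n$ by $(AX)_k=\sum_{i=1}^m\beta^k_ix_i$, and the linear map $C:\mathbb{R}^m\to\mathbb{R}^n$ by $CX=B(X_0,X)+B(X,X_0)+AX$. An analytic family of solutions with initial term $X_0$ is a power series $X(t)=\sum_{p=0}^\infty X_pt^p$ with $X_p\in\mathbb{R}^m$, positive radius of convergence, constant term equal to $X_0$, and $F(X(t))=0$ for all sufficiently small $t$; it is nonconstant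 if $X_p\neq 0$ for some $p\ge 1$. *)

theory Defs
  imports "HOL-Analysis.Analysis"
begin

definition Fmap :: "('n \<Rightarrow> 'm::finite \<Rightarrow> 'm \<Rightarrow> real) \<Rightarrow> ('n \<Rightarrow> 'm \<Rightarrow> real) \<Rightarrow> ('n \<Rightarrow> real)
    \<Rightarrow> real^'m \<Rightarrow> real^'n::finite" where
  "Fmap \<alpha> \<beta> \<gamma> X = (\<chi> k. (\<Sum>i\<in>UNIV. \<Sum>j\<in>UNIV. \<alpha> k i j * X$i * X$j)
                        + (\<Sum>i\<in>UNIV. \<beta> k i * X$i) + \<gamma> k)"

definition Bmap :: "('n \<Rightarrow> 'm::finite \<Rightarrow> 'm \<Rightarrow> real) \<Rightarrow> real^'m \<Rightarrow> real^'m \<Rightarrow> real^'n::finite" where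
  "Bmap \<alpha> X Y = (\<chi> k. \<Sum>i\<in>UNIV. \<Sum>j\<in>UNIV. \<alpha> k i j * X$i * Y$j)"

definition Amap :: "('n \<Rightarrow> 'm::finite \<Rightarrow> real) \<Rightarrow> real^'m \<Rightarrow> real^'n::finite" where
  "Amap \<beta> X = (\<chi> k. \<Sum>i\<in>UNIV. \<beta> k i * X$i)"

definition Cmap :: "('n \<Rightarrow> 'm::finite \<Rightarrow> 'm \<Rightarrow> real) \<Rightarrow> ('n \<Rightarrow> 'm \<Rightarrow> real) \<Rightarrow> real^'m
    \<Rightarrow> real^'m \<Rightarrow> real^'n::finite" where
  "Cmap \<alpha> \<beta> X0 X = Bmap \<alpha> X0 X + Bmap \<alpha> X X0 + Amap \<beta> X"

definition analytic_family ::
  "(real^'m::finite \<Rightarrow> real^'n::finite) \<Rightarrow> real^'m \<Rightarrow> (nat \<Rightarrow> real^'m) \<Rightarrow> bool" where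
  "analytic_family F X0 Xs \<longleftrightarrow>
     (\<exists>r>0. \<forall>t::real. \<bar>t\<bar> < r \<longrightarrow> summable (\<lambda>p. t ^ p *\<^sub>R Xs p))
     \<and> Xs 0 = X0
     \<and> (\<forall>\<^sub>F t in nhds (0::real). F (\<Sum>p. t ^ p *\<^sub>R Xs p) = 0)"

definition nonconstant_family :: "(nat \<Rightarrow> real^'m::finite) \<Rightarrow> bool" where
  "nonconstant_family Xs \<longleftrightarrow> (\<exists>p\<ge>1. Xs p \<noteq> 0)"

end

theory Submission
  imports Defs
begin

text \<open>Write a nonconstant family as \<open>X(t) = X\<^sub>0 + t\<^sup>q Y(t)\<close>, where \<open>q \<ge> 1\<close> is the
  first index with \<open>X\<^sub>q \<noteq> 0\<close> and \<open>Y\<close> is continuous with \<open>Y(0) = X\<^sub>q\<close>. Since \<open>F\<close> is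
  quadratic, \<open>0 = F(X(t)) = t\<^sup>q (C Y(t) + t\<^sup>q B(Y(t),Y(t)))\<close>. For \<open>t \<rightarrow> 0\<close> this gives
  \<open>C X\<^sub>q = 0\<close>, and \<open>C (t\<^sup>-\<^sup>q Y(t)) = -B(Y(t),Y(t))\<close> shows that \<open>-B(X\<^sub>q,X\<^sub>q)\<close> is a limit of
  points of the range of \<open>C\<close>, which is a closed subspace. So \<open>X\<^sub>1 = X\<^sub>q\<close> would extend
  to second order.\<close>

lemma summable_powser_shift_scaleR:
  fixes c :: "nat \<Rightarrow> 'a::real_normed_vector"
  assumes "summable (\<lambda>p. t ^ p *\<^sub>R c p)"
  shows "summable (\<lambda>p. t ^ p *\<^sub>R c (p + q))"
proof (cases "t = 0")
  case False
  have "summable (\<lambda>p. inverse (t ^ q) *\<^sub>R (t ^ (p + q) *\<^sub>R c (p + q)))"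
    using summable_ignore_initial_segment[OF assms, of q] by (rule summable_scaleR_right)
  then show ?thesis
    using False by (simp add: power_add field_simps)
qed (rule summable_finite[of "{0}"], auto)

lemma suminf_powser_split_scaleR:
  fixes c :: "nat \<Rightarrow> 'a::real_normed_vector"
  assumes "summable (\<lambda>p. t ^ p *\<^sub>R c p)"
  shows "(\<Sum>p. t ^ p *\<^sub>R c p) = (\<Sum>p<q. t ^ p *\<^sub>R c p) + t ^ q *\<^sub>R (\<Sum>p. t ^ p *\<^sub>R c (p + q))"
proof -
  have "(\<Sum>p. t ^ (p + q) *\<^sub>R c (p + q)) = t ^ q *\<^sub>R (\<Sum>p. t ^ p *\<^sub>R c (p + q))"
    using suminf_scaleR_right[OF summable_powser_shift_scaleR[OF assms], of "t ^ q"]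
    by (simp add: power_add mult.commute)
  then show ?thesis
    using suminf_split_initial_segment[OF assms, of q] by simp
qed

lemma tendsto_vec_powser_at_0:
  fixes c :: "nat \<Rightarrow> real^'n"
  assumes "r > 0" and summable: "\<And>t. \<bar>t\<bar> < r \<Longrightarrow> summable (\<lambda>p. t ^ p *\<^sub>R c p)"
  shows "((\<lambda>t. \<Sum>p. t ^ p *\<^sub>R c p) \<longlongrightarrow> c 0) (at 0)"
proof -
  have component: "(\<Sum>p. t ^ p *\<^sub>R c p) $ i = (\<Sum>p. c p $ i * t ^ p)" if "\<bar>t\<bar> < r" for t i
    using bounded_linear.suminf[OF bounded_linear_vec_nth summable[OF that], of i]
    by (simp add: mult.commute)
  have "isCont (\<lambda>t. \<Sum>p. c p $ i * t ^ p) 0" for i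
  proof (rule isCont_powser)
    show "summable (\<lambda>p. c p $ i * (r / 2) ^ p)"
      using summable_vec_nth[OF summable[of "r / 2"], of i] \<open>r > 0\<close> by (simp add: mult.commute)
  qed (use \<open>r > 0\<close> in simp)
  then have "((\<lambda>t. \<chi> i. \<Sum>p. c p $ i * t ^ p) \<longlongrightarrow> (\<chi> i. c 0 $ i)) (at 0)"
    by (intro tendsto_vec_lambda) (simp add: isCont_def)
  moreover have "\<forall>\<^sub>F t in at 0. (\<chi> i. \<Sum>p. c p $ i * t ^ p) = (\<Sum>p. t ^ p *\<^sub>R c p)"
    using \<open>r > 0\<close> by (auto simp: eventually_at dist_real_def vec_eq_iff component intro!: exI[of _ r])
  ultimately show ?thesis
    by (simp add: tendsto_cong)
qed

lemma analytic_family_leading_term: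
  fixes F :: "real^'m \<Rightarrow> real^'n"
  assumes family: "analytic_family F X0 Xs" and "q \<ge> 1"
    and gap: "\<And>p. 1 \<le> p \<Longrightarrow> p < q \<Longrightarrow> Xs p = 0"
  obtains Y where "(Y \<longlongrightarrow> Xs q) (at 0)" and "\<forall>\<^sub>F t in at 0. F (X0 + t ^ q *\<^sub>R Y t) = 0"
proof -
  obtain r where "r > 0" and summable: "\<And>t. \<bar>t\<bar> < r \<Longrightarrow> summable (\<lambda>p. t ^ p *\<^sub>R Xs p)"
    and "Xs 0 = X0" and zero: "\<forall>\<^sub>F t in nhds 0. F (\<Sum>p. t ^ p *\<^sub>R Xs p) = 0"
    using family unfolding analytic_family_def by blast
  define Y where "Y t = (\<Sum>p. t ^ p *\<^sub>R Xs (p + q))" for t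
  have "(Y \<longlongrightarrow> Xs q) (at 0)"
    unfolding Y_def using tendsto_vec_powser_at_0[OF \<open>r > 0\<close> summable_powser_shift_scaleR[OF summable]]
    by simp
  moreover have "(\<Sum>p. t ^ p *\<^sub>R Xs p) = X0 + t ^ q *\<^sub>R Y t" if "\<bar>t\<bar> < r" for t
  proof -
    have "(\<Sum>p<q. t ^ p *\<^sub>R Xs p) = (\<Sum>p\<in>{0}. t ^ p *\<^sub>R Xs p)"
      by (rule sum.mono_neutral_right) (use \<open>q \<ge> 1\<close> gap in auto)
    then show ?thesis
      using suminf_powser_split_scaleR[OF summable[OF that], of q] \<open>Xs 0 = X0\<close> by (simp add: Y_def)
  qed
  then have "\<forall>\<^sub>F t in nhds 0. (\<Sum>p. t ^ p *\<^sub>R Xs p) = X0 + t ^ q *\<^sub>R Y t"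
    using \<open>r > 0\<close> by (auto simp: eventually_nhds_metric dist_real_def intro!: exI[of _ r])
  with zero have "\<forall>\<^sub>F t in at 0. F (X0 + t ^ q *\<^sub>R Y t) = 0"
    by (auto simp: eventually_at_filter elim: eventually_mono[OF eventually_conj])
  ultimately show ?thesis
    using that by blast
qed

lemma Fmap_add:
  "Fmap \<alpha> \<beta> \<gamma> (X0 + V) = Fmap \<alpha> \<beta> \<gamma> X0 + Cmap \<alpha> \<beta> X0 V + Bmap \<alpha> V V"
  by (simp add: vec_eq_iff Fmap_def Cmap_def Bmap_def Amap_def algebra_simps sum.distrib)

lemma Bmap_scaleR: "Bmap \<alpha> (a *\<^sub>R X) (b *\<^sub>R Y) = (a * b) *\<^sub>R Bmap \<alpha> X Y"
  by (simp add: vec_eq_iff Bmap_def algebra_simps sum_distrib_left)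

lemma tendsto_Bmap:
  "(X \<longlongrightarrow> L) F \<Longrightarrow> (Y \<longlongrightarrow> M) F \<Longrightarrow> ((\<lambda>t. Bmap \<alpha> (X t) (Y t)) \<longlongrightarrow> Bmap \<alpha> L M) F"
  unfolding Bmap_def by (intro tendsto_intros)

lemma linear_Cmap: "linear (Cmap \<alpha> \<beta> X0)"
  by (rule linearI)
    (simp_all add: vec_eq_iff Cmap_def Bmap_def Amap_def algebra_simps sum_distrib_left sum.distrib)

lemma bounded_linear_Cmap: "bounded_linear (Cmap \<alpha> \<beta> X0)"
  using linear_Cmap by (simp add: linear_conv_bounded_linear)

lemma closed_range_Cmap: "closed (range (Cmap \<alpha> \<beta> X0))"
  by (rule closed_subspace[OF linear_subspace_image[OF linear_Cmap subspace_UNIV]])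

lemma quadratic_zero_curve_leading_term:
  assumes root: "Fmap \<alpha> \<beta> \<gamma> X0 = 0" and "q \<ge> 1" and Y: "(Y \<longlongrightarrow> V) (at 0)"
    and zero: "\<forall>\<^sub>F t in at 0. Fmap \<alpha> \<beta> \<gamma> (X0 + t ^ q *\<^sub>R Y t) = 0"
  shows "Cmap \<alpha> \<beta> X0 V = 0" and "- Bmap \<alpha> V V \<in> range (Cmap \<alpha> \<beta> X0)"
proof -
  note Cmap_scaleR = linear_scale[OF linear_Cmap]
  have reduced: "\<forall>\<^sub>F t in at 0. t \<noteq> 0 \<and> Cmap \<alpha> \<beta> X0 (Y t) = - (t ^ q *\<^sub>R Bmap \<alpha> (Y t) (Y t))"
    using zero eventually_neq_at_within[of 0 0 UNIV]
  proof eventually_elim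
    case (elim t)
    then have "t ^ q *\<^sub>R (Cmap \<alpha> \<beta> X0 (Y t) + t ^ q *\<^sub>R Bmap \<alpha> (Y t) (Y t)) = 0"
      by (simp add: Fmap_add root Cmap_scaleR Bmap_scaleR scaleR_add_right)
    with elim show ?case
      by (simp add: eq_neg_iff_add_eq_0)
  qed
  have "((\<lambda>t. - (t ^ q *\<^sub>R Bmap \<alpha> (Y t) (Y t))) \<longlongrightarrow> - ((0::real) ^ q *\<^sub>R Bmap \<alpha> V V)) (at 0)"
    by (intro tendsto_intros tendsto_Bmap Y)
  then have "((\<lambda>t. - (t ^ q *\<^sub>R Bmap \<alpha> (Y t) (Y t))) \<longlongrightarrow> 0) (at 0)"
    using \<open>q \<ge> 1\<close> by (simp add: power_0_left)
  then have "((\<lambda>t. Cmap \<alpha> \<beta> X0 (Y t)) \<longlongrightarrow> 0) (at 0)"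
  proof (rule Lim_transform_eventually)
    show "\<forall>\<^sub>F t in at 0. - (t ^ q *\<^sub>R Bmap \<alpha> (Y t) (Y t)) = Cmap \<alpha> \<beta> X0 (Y t)"
      using reduced by (rule eventually_mono) simp
  qed
  with bounded_linear.tendsto[OF bounded_linear_Cmap Y] show "Cmap \<alpha> \<beta> X0 V = 0"
    by (rule tendsto_unique[OF at_neq_bot])
  show "- Bmap \<alpha> V V \<in> range (Cmap \<alpha> \<beta> X0)"
  proof (rule Lim_in_closed_set[OF closed_range_Cmap _ at_neq_bot])
    show "((\<lambda>t. - Bmap \<alpha> (Y t) (Y t)) \<longlongrightarrow> - Bmap \<alpha> V V) (at 0)"
      by (intro tendsto_intros tendsto_Bmap Y)
    show "\<forall>\<^sub>F t in at 0. - Bmap \<alpha> (Y t) (Y t) \<in> range (Cmap \<alpha> \<beta> X0)"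
      using reduced
    proof eventually_elim
      case (elim t)
      then have "Cmap \<alpha> \<beta> X0 (inverse (t ^ q) *\<^sub>R Y t) = - Bmap \<alpha> (Y t) (Y t)"
        by (simp add: Cmap_scaleR)
      then show ?case
        by (metis rangeI)
    qed
  qed
qed

theorem theorem3:
  fixes \<alpha> :: "'n::finite \<Rightarrow> 'm::finite \<Rightarrow> 'm \<Rightarrow> real"
    and \<beta> :: "'n \<Rightarrow> 'm \<Rightarrow> real"
    and \<gamma> :: "'n \<Rightarrow> real"
    and X0 :: "real^'m"
  assumes sym: "\<And>k i j. \<alpha> k i j = \<alpha> k j i"
    and root: "Fmap \<alpha> \<beta> \<gamma> X0 = 0"
    and no_ext: "\<And>X1. X1 \<noteq> 0 \<Longrightarrow> Cmap \<alpha> \<beta> X0 X1 = 0 \<Longrightarrow>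
                   \<not> (\<exists>X2. Cmap \<alpha> \<beta> X0 X2 = - Bmap \<alpha> X1 X1)"
  shows "\<not> (\<exists>Xs. analytic_family (Fmap \<alpha> \<beta> \<gamma>) X0 Xs \<and> nonconstant_family Xs)"
proof
  assume "\<exists>Xs. analytic_family (Fmap \<alpha> \<beta> \<gamma>) X0 Xs \<and> nonconstant_family Xs"
  then obtain Xs where family: "analytic_family (Fmap \<alpha> \<beta> \<gamma>) X0 Xs"
    and nonconstant: "\<exists>p\<ge>1. Xs p \<noteq> 0"
    unfolding nonconstant_family_def by blast
  define q where "q = (LEAST p. p \<ge> 1 \<and> Xs p \<noteq> 0)"
  have "q \<ge> 1" and "Xs q \<noteq> 0"
    using LeastI_ex[OF nonconstant] unfolding q_def by auto
  have gap: "Xs p = 0" if "1 \<le> p" "p < q" for p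
    using not_less_Least[of p "\<lambda>p. p \<ge> 1 \<and> Xs p \<noteq> 0"] that unfolding q_def by auto
  obtain Y where "(Y \<longlongrightarrow> Xs q) (at 0)" and "\<forall>\<^sub>F t in at 0. Fmap \<alpha> \<beta> \<gamma> (X0 + t ^ q *\<^sub>R Y t) = 0"
    using analytic_family_leading_term[OF family \<open>q \<ge> 1\<close> gap] by blast
  from quadratic_zero_curve_leading_term[OF root \<open>q \<ge> 1\<close> this]
  have "Cmap \<alpha> \<beta> X0 (Xs q) = 0" and "\<exists>X2. Cmap \<alpha> \<beta> X0 X2 = - Bmap \<alpha> (Xs q) (Xs q)"
    by (metis rangeE)+
  with no_ext[OF \<open>Xs q \<noteq> 0\<close>] show False
    by blast
qed

end
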